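(* If a set $S$ of sentences has a model, then there exists an alphabet that includes the original alphabet and an interpretation based on the expanded alphabet which is a separating model for $S$ (with respect to the expanded alphabet).
   Context: Setting: higher-order logic (Church's simple theory of types, without a description operator), with Henkin semantics: an interpretation $I$ for an alphabet consists of domains $D_\alpha$ for each type ($D_o=\{\mathsf T,\mathsf F\}$, $D_{\alpha\to\beta}$ a set of functions $D_\alpha\to D_\beta$) and a valuation of the constants of the alphabet (equality denoting identity) such that every term has a denotation; $V(t,I)$ is the denotation of a closed term $t$. Sentences are closed terms of type $o$; a model for a set of sentences is an interpretation in which each of them is true. An interpretation $I$ for an alphabet is separating if for every pair $r,s$ of closed terms of the same function type $\alpha\to\beta$ with $V(r,I)\neq V(s,I)$ there is a closed term $t$ of type $\alpha$ formed from symbols of that alphabet with $V((r\,t),I)\neq V((s\,t),I)$; a separating model is a separating interpretation that is a model. *)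

theory Defs
  imports Main
begin

datatype ty = TO | TI | TFun ty ty

text \<open>A constant symbol of the alphabet is a
  pair (name, type). Equality Eq a (at type a -> a -> o) is a logical constant
  available at every type. Variables are (index, type); Abs x a t binds Var x a.\<close>
datatype 'c trm =
    Var nat ty
  | Const 'c ty
  | Eq ty
  | App "'c trm" "'c trm"
  | Abs nat ty "'c trm"

fun typ_of :: "'c trm \<Rightarrow> ty option" where
  "typ_of (Var x a) = Some a"
| "typ_of (Const c a) = Some a"
| "typ_of (Eq a) = Some (TFun a (TFun a TO))"
| "typ_of (App s t) =
     (case (typ_of s, typ_of t) of
        (Some (TFun a b), Some a') \<Rightarrow> (if a = a' then Some b else None)
      | _ \<Rightarrow> None)"
| "typ_of (Abs x a t) = map_option (TFun a) (typ_of t)"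

fun fvs :: "'c trm \<Rightarrow> (nat \<times> ty) set" where
  "fvs (Var x a) = {(x, a)}"
| "fvs (Const c a) = {}"
| "fvs (Eq a) = {}"
| "fvs (App s t) = fvs s \<union> fvs t"
| "fvs (Abs x a t) = fvs t - {(x, a)}"

fun consts_of :: "'c trm \<Rightarrow> ('c \<times> ty) set" where
  "consts_of (Var x a) = {}"
| "consts_of (Const c a) = {(c, a)}"
| "consts_of (Eq a) = {}"
| "consts_of (App s t) = consts_of s \<union> consts_of t"
| "consts_of (Abs x a t) = consts_of t"

definition term_of :: "('c \<times> ty) set \<Rightarrow> 'c trm \<Rightarrow> ty \<Rightarrow> bool" where
  "term_of A t a \<longleftrightarrow> consts_of t \<subseteq> A \<and> typ_of t = Some a"

definition closed_term_of :: "('c \<times> ty) set \<Rightarrow> 'c trm \<Rightarrow> ty \<Rightarrow> bool" where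
  "closed_term_of A t a \<longleftrightarrow> term_of A t a \<and> fvs t = {}"

definition sentence :: "('c \<times> ty) set \<Rightarrow> 'c trm \<Rightarrow> bool" where
  "sentence A t \<longleftrightarrow> closed_term_of A t TO"

text \<open>An element f of D (TFun a b) is read as the function
  x \<mapsto> app f x from D a to D b; extensionality (below) makes D (TFun a b) correspond
  exactly to a set of functions D a \<rightarrow> D b.\<close>
record ('u, 'c) interp =
  D :: "ty \<Rightarrow> 'u set"
  app :: "'u \<Rightarrow> 'u \<Rightarrow> 'u"
  tt :: 'u
  ff :: 'u
  cval :: "'c \<Rightarrow> ty \<Rightarrow> 'u"

fun eval :: "('u, 'c) interp \<Rightarrow> (nat \<Rightarrow> ty \<Rightarrow> 'u) \<Rightarrow> 'c trm \<Rightarrow> 'u" where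
  "eval I \<phi> (Var x a) = \<phi> x a"
| "eval I \<phi> (Const c a) = cval I c a"
| "eval I \<phi> (Eq a) =
     (SOME q. q \<in> D I (TFun a (TFun a TO)) \<and>
        (\<forall>x\<in>D I a. \<forall>y\<in>D I a. app I (app I q x) y = (if x = y then tt I else ff I)))"
| "eval I \<phi> (App s t) = app I (eval I \<phi> s) (eval I \<phi> t)"
| "eval I \<phi> (Abs x a t) =
     (SOME f. f \<in> D I (TFun a (the (typ_of t))) \<and>
        (\<forall>d\<in>D I a. app I f d = eval I (\<phi>(x := (\<phi> x)(a := d))) t))"

definition assignment :: "('u, 'c) interp \<Rightarrow> (nat \<Rightarrow> ty \<Rightarrow> 'u) \<Rightarrow> bool" where
  "assignment I \<phi> \<longleftrightarrow> (\<forall>x a. \<phi> x a \<in> D I a)"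

definition is_interp :: "('c \<times> ty) set \<Rightarrow> ('u, 'c) interp \<Rightarrow> bool" where
  "is_interp A I \<longleftrightarrow>
     D I TO = {tt I, ff I} \<and> tt I \<noteq> ff I \<and>
     (\<forall>a. D I a \<noteq> {}) \<and>
     (\<forall>a b f x. f \<in> D I (TFun a b) \<longrightarrow> x \<in> D I a \<longrightarrow> app I f x \<in> D I b) \<and>
     (\<forall>a b f g. f \<in> D I (TFun a b) \<longrightarrow> g \<in> D I (TFun a b) \<longrightarrow>
                (\<forall>x\<in>D I a. app I f x = app I g x) \<longrightarrow> f = g) \<and>
     (\<forall>(c, a)\<in>A. cval I c a \<in> D I a) \<and>
     (\<forall>a. \<exists>q\<in>D I (TFun a (TFun a TO)).
            \<forall>x\<in>D I a. \<forall>y\<in>D I a. app I (app I q x) y = (if x = y then tt I else ff I)) \<and>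
     (\<forall>x a t b \<phi>. term_of A t b \<longrightarrow> assignment I \<phi> \<longrightarrow>
        (\<exists>f\<in>D I (TFun a b). \<forall>d\<in>D I a. app I f d = eval I (\<phi>(x := (\<phi> x)(a := d))) t))"

text \<open>Denotation V(t, I) of a closed term (independent of the assignment).\<close>
definition V :: "'c trm \<Rightarrow> ('u, 'c) interp \<Rightarrow> 'u" where
  "V t I = eval I (\<lambda>x a. SOME d. d \<in> D I a) t"

definition is_model :: "('c \<times> ty) set \<Rightarrow> ('u, 'c) interp \<Rightarrow> 'c trm set \<Rightarrow> bool" where
  "is_model A I S \<longleftrightarrow> is_interp A I \<and> (\<forall>s\<in>S. V s I = tt I)"

definition separating :: "('c \<times> ty) set \<Rightarrow> ('u, 'c) interp \<Rightarrow> bool" where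
  "separating A I \<longleftrightarrow> is_interp A I \<and>
     (\<forall>r s a b. closed_term_of A r (TFun a b) \<longrightarrow> closed_term_of A s (TFun a b) \<longrightarrow>
        V r I \<noteq> V s I \<longrightarrow>
        (\<exists>t. closed_term_of A t a \<and> V (App r t) I \<noteq> V (App s t) I))"

definition separating_model :: "('c \<times> ty) set \<Rightarrow> ('u, 'c) interp \<Rightarrow> 'c trm set \<Rightarrow> bool" where
  "separating_model A I S \<longleftrightarrow> separating A I \<and> is_model A I S"

end

theory Submission
  imports Defs
begin

text \<open>Expand the alphabet by a constant \<open>Inr u\<close> of type \<open>a\<close> for every element \<open>u\<close> of every
  domain \<open>D a\<close>, interpreted as \<open>u\<close> itself. Separation is then immediate from extensionality:
  two distinct functions differ at some argument, and that argument has a name. The real work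
  is that the expanded structure is still a Henkin interpretation, i.e. every term of the new
  alphabet denotes. A term containing new constants denotes what the old term obtained by
  replacing each new constant with a fresh variable denotes, under an assignment sending that
  variable to the named element; so comprehension for the old alphabet suffices.\<close>

lemma typ_of_AppD:
  "typ_of (App s t) = Some b \<Longrightarrow> \<exists>a. typ_of s = Some (TFun a b) \<and> typ_of t = Some a"
  by (auto split: option.splits ty.splits if_splits)

lemma assignment_default:
  assumes "is_interp A I"
  shows "assignment I (\<lambda>x a. SOME d. d \<in> D I a)"
  using assms unfolding assignment_def is_interp_def by (simp add: some_in_eq)

lemma is_interp_equality:
  assumes "is_interp A I"
  shows "\<exists>q\<in>D I (TFun a (TFun a TO)).
           \<forall>x\<in>D I a. \<forall>y\<in>D I a. app I (app I q x) y = (if x = y then tt I else ff I)"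
  using assms unfolding is_interp_def by blast

lemma is_interp_comprehension:
  assumes "is_interp A I" "term_of A t b" "assignment I \<phi>"
  shows "\<exists>f\<in>D I (TFun a b). \<forall>d\<in>D I a. app I f d = eval I (\<phi>(x := (\<phi> x)(a := d))) t"
  using assms unfolding is_interp_def by blast

lemma eval_in_D:
  assumes I: "is_interp A I"
  shows "term_of A t b \<Longrightarrow> assignment I \<phi> \<Longrightarrow> eval I \<phi> t \<in> D I b"
proof (induction t arbitrary: \<phi> b)
  case (Var x a)
  then show ?case by (auto simp: term_of_def assignment_def)
next
  case (Const c a)
  then show ?case using I by (auto simp: term_of_def is_interp_def)
next
  case (Eq a)
  obtain q where "q \<in> D I (TFun a (TFun a TO))"
    "\<forall>x\<in>D I a. \<forall>y\<in>D I a. app I (app I q x) y = (if x = y then tt I else ff I)"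
    using is_interp_equality[OF I] by blast
  then show ?case using Eq.prems
    by (simp add: term_of_def) (rule someI2[where a = q], auto)
next
  case (App s t)
  then obtain a where "typ_of s = Some (TFun a b)" "typ_of t = Some a"
    using typ_of_AppD unfolding term_of_def by blast
  with App have "eval I \<phi> s \<in> D I (TFun a b)" "eval I \<phi> t \<in> D I a"
    by (auto simp: term_of_def)
  then show ?case using I by (simp add: is_interp_def)
next
  case (Abs x a t)
  then obtain b' where b': "b = TFun a b'" "typ_of t = Some b'" "term_of A t b'"
    by (auto simp: term_of_def)
  then obtain f where "f \<in> D I (TFun a b')"
    "\<forall>d\<in>D I a. app I f d = eval I (\<phi>(x := (\<phi> x)(a := d))) t"
    using is_interp_comprehension[OF I _ Abs.prems(2)] by blast
  then show ?case using b' by simp (rule someI2[where a = f], auto)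
qed

lemma separating_if_elements_named:
  assumes I: "is_interp A I"
    and named: "\<And>u a. u \<in> D I a \<Longrightarrow> \<exists>t. closed_term_of A t a \<and> V t I = u"
  shows "separating A I"
  unfolding separating_def
proof (intro conjI I allI impI)
  fix r s a b
  assume r: "closed_term_of A r (TFun a b)" and s: "closed_term_of A s (TFun a b)"
    and ne: "V r I \<noteq> V s I"
  have "V r I \<in> D I (TFun a b)" "V s I \<in> D I (TFun a b)"
    using eval_in_D[OF I] assignment_default[OF I] r s
    unfolding V_def closed_term_of_def by auto
  with ne I obtain u where u: "u \<in> D I a" "app I (V r I) u \<noteq> app I (V s I) u"
    unfolding is_interp_def by meson
  obtain t where "closed_term_of A t a" "V t I = u"
    using named[OF u(1)] by blast
  with u(2) show "\<exists>t. closed_term_of A t a \<and> V (App r t) I \<noteq> V (App s t) I"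
    unfolding V_def by auto
qed

definition named_alphabet :: "('c \<times> ty) set \<Rightarrow> ('u, 'c) interp \<Rightarrow> (('c + 'u) \<times> ty) set" where
  "named_alphabet A I = (\<lambda>(c, a). (Inl c, a)) ` A \<union> {(Inr u, a) | u a. u \<in> D I a}"

definition named_interp :: "('u, 'c) interp \<Rightarrow> ('u, 'c + 'u) interp" where
  "named_interp I = \<lparr>D = D I, app = app I, tt = tt I, ff = ff I,
                      cval = case_sum (cval I) (\<lambda>u a. u)\<rparr>"

lemma named_interp_simps [simp]:
  "D (named_interp I) = D I" "app (named_interp I) = app I"
  "tt (named_interp I) = tt I" "ff (named_interp I) = ff I"
  "cval (named_interp I) (Inl c) = cval I c" "cval (named_interp I) (Inr u) a = u"
  by (simp_all add: named_interp_def)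

lemma typ_of_map_trm: "typ_of (map_trm f t) = typ_of t"
  by (induction t) (auto split: option.splits ty.splits)

lemma eval_named_interp_map_trm:
  "eval (named_interp I) \<phi> (map_trm Inl t) = eval I \<phi> t"
  by (induction t arbitrary: \<phi>) (simp_all add: typ_of_map_trm)

lemma V_named_interp_map_trm: "V (map_trm Inl t) (named_interp I) = V t I"
  by (simp add: V_def eval_named_interp_map_trm)

fun names_to_vars :: "('u \<times> ty \<Rightarrow> nat) \<Rightarrow> ('c + 'u) trm \<Rightarrow> 'c trm" where
  "names_to_vars \<nu> (Var x a) = Var x a"
| "names_to_vars \<nu> (Const c a) = (case c of Inl c' \<Rightarrow> Const c' a | Inr u \<Rightarrow> Var (\<nu> (u, a)) a)"
| "names_to_vars \<nu> (Eq a) = Eq a"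
| "names_to_vars \<nu> (App s t) = App (names_to_vars \<nu> s) (names_to_vars \<nu> t)"
| "names_to_vars \<nu> (Abs x a t) = Abs x a (names_to_vars \<nu> t)"

text \<open>Free and bound variables: a fresh variable must also avoid capture.\<close>
fun vars_of :: "'c trm \<Rightarrow> nat set" where
  "vars_of (Var x a) = {x}"
| "vars_of (Const c a) = {}"
| "vars_of (Eq a) = {}"
| "vars_of (App s t) = vars_of s \<union> vars_of t"
| "vars_of (Abs x a t) = insert x (vars_of t)"

lemma finite_vars_of: "finite (vars_of t)"
  by (induction t) auto

lemma finite_consts_of: "finite (consts_of t)"
  by (induction t) auto

lemma typ_of_names_to_vars: "typ_of (names_to_vars \<nu> t) = typ_of t"
  by (induction t) (auto split: sum.splits)

lemma consts_of_names_to_vars: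
  "consts_of (names_to_vars \<nu> t) = {(c, a). (Inl c, a) \<in> consts_of t}"
  by (induction t) (auto split: sum.splits)

lemma eval_names_to_vars:
  assumes "\<forall>n\<in>vars_of t. \<forall>c. \<psi> n c = \<phi> n c"
    and "\<forall>u b. (Inr u, b) \<in> consts_of t \<longrightarrow> \<psi> (\<nu> (u, b)) b = u \<and> \<nu> (u, b) \<notin> vars_of t"
  shows "eval (named_interp I) \<phi> t = eval I \<psi> (names_to_vars \<nu> t)"
  using assms
proof (induction t arbitrary: \<phi> \<psi>)
  case (Const c a)
  then show ?case by (cases c) auto
next
  case (App s t)
  have "eval (named_interp I) \<phi> s = eval I \<psi> (names_to_vars \<nu> s)"
    "eval (named_interp I) \<phi> t = eval I \<psi> (names_to_vars \<nu> t)"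
    by (rule App.IH; use App.prems in auto)+
  then show ?case by simp
next
  case (Abs x a t)
  have "eval (named_interp I) (\<phi>(x := (\<phi> x)(a := d))) t
        = eval I (\<psi>(x := (\<psi> x)(a := d))) (names_to_vars \<nu> t)" for d
    by (rule Abs.IH) (use Abs.prems in auto)
  then show ?case by (simp add: typ_of_names_to_vars)
qed simp_all

lemma fresh_naming:
  assumes "finite F" "finite X" "assignment I \<phi>" "\<forall>(u, c)\<in>F. u \<in> D I c"
  obtains \<nu> :: "'u \<times> ty \<Rightarrow> nat" and \<psi> where "assignment I \<psi>" "\<forall>n\<in>X. \<forall>c. \<psi> n c = \<phi> n c"
    "\<forall>(u, c)\<in>F. \<nu> (u, c) \<notin> X \<and> \<psi> (\<nu> (u, c)) c = u"
proof -
  obtain g :: "'u \<times> ty \<Rightarrow> nat" where g: "inj_on g F"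
    using finite_imp_inj_to_nat_seg[OF assms(1)] by blast
  define N where "N = Suc (Max (insert 0 X))"
  have below_N: "n < N" if "n \<in> X" for n
    using that assms(2) unfolding N_def by (simp add: le_imp_less_Suc)
  define \<nu> where "\<nu> p = N + g p" for p
  define \<psi> where "\<psi> n c = (if \<exists>u. (u, c) \<in> F \<and> \<nu> (u, c) = n
      then SOME u. (u, c) \<in> F \<and> \<nu> (u, c) = n else \<phi> n c)" for n c
  have named: "\<psi> (\<nu> (u, c)) c = u" if "(u, c) \<in> F" for u c
  proof -
    have "(SOME u'. (u', c) \<in> F \<and> \<nu> (u', c) = \<nu> (u, c)) = u"
      using that g unfolding \<nu>_def inj_on_def by (intro some_equality) auto
    then show ?thesis unfolding \<psi>_def using that by auto
  qed
  have "\<psi> n c \<in> D I c" for n c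
  proof (cases "\<exists>u. (u, c) \<in> F \<and> \<nu> (u, c) = n")
    case True
    then have "\<psi> n c = (SOME u. (u, c) \<in> F \<and> \<nu> (u, c) = n)"
      unfolding \<psi>_def by simp
    with someI_ex[OF True] have "(\<psi> n c, c) \<in> F" by simp
    then show ?thesis using assms(4) by auto
  next
    case False
    then have "\<psi> n c = \<phi> n c"
      unfolding \<psi>_def by (rule if_not_P)
    then show ?thesis using assms(3) unfolding assignment_def by simp
  qed
  moreover have "\<psi> n c = \<phi> n c" if "n \<in> X" for n c
    using below_N[OF that] unfolding \<psi>_def \<nu>_def by auto
  moreover have "\<nu> (u, c) \<notin> X" for u c
    using below_N unfolding \<nu>_def by fastforce
  ultimately show ?thesis using that named unfolding assignment_def by blast
qed

lemma named_interp_comprehension: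
  assumes I: "is_interp A I"
    and t: "term_of (named_alphabet A I) t b" and \<phi>: "assignment (named_interp I) \<phi>"
  shows "\<exists>f\<in>D I (TFun a b). \<forall>d\<in>D I a.
           app I f d = eval (named_interp I) (\<phi>(x := (\<phi> x)(a := d))) t"
proof -
  define F where "F = {(u, c). (Inr u, c) \<in> consts_of t}"
  have "F \<subseteq> (\<lambda>(k, c). (projr k, c)) ` consts_of t"
    unfolding F_def by force
  then have F_finite: "finite F" using finite_consts_of finite_subset by blast
  have F_named: "\<forall>(u, c)\<in>F. u \<in> D I c"
    using t unfolding F_def term_of_def named_alphabet_def by auto
  have \<phi>_I: "assignment I \<phi>"
    using \<phi> by (simp add: assignment_def)
  obtain \<nu> \<psi> where \<psi>: "assignment I \<psi>"
    "\<forall>n\<in>insert x (vars_of t). \<forall>c. \<psi> n c = \<phi> n c"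
    "\<forall>(u, c)\<in>F. \<nu> (u, c) \<notin> insert x (vars_of t) \<and> \<psi> (\<nu> (u, c)) c = u"
    by (rule fresh_naming[OF F_finite finite.insertI[OF finite_vars_of] \<phi>_I F_named])
  have "term_of A (names_to_vars \<nu> t) b"
    using t unfolding term_of_def named_alphabet_def
    by (auto simp: consts_of_names_to_vars typ_of_names_to_vars)
  then obtain f where f: "f \<in> D I (TFun a b)"
    "\<forall>d\<in>D I a. app I f d = eval I (\<psi>(x := (\<psi> x)(a := d))) (names_to_vars \<nu> t)"
    using is_interp_comprehension[OF I _ \<psi>(1)] by blast
  have "eval (named_interp I) (\<phi>(x := (\<phi> x)(a := d))) t
        = eval I (\<psi>(x := (\<psi> x)(a := d))) (names_to_vars \<nu> t)" for d
    by (rule eval_names_to_vars) (use \<psi>(2,3) in \<open>auto simp: F_def\<close>)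
  with f show ?thesis by auto
qed

lemma is_interp_named_interp:
  assumes I: "is_interp A I"
  shows "is_interp (named_alphabet A I) (named_interp I)"
  using I unfolding is_interp_def named_interp_simps
proof (elim conjE, intro conjI)
  show "\<forall>(c, a)\<in>named_alphabet A I. cval (named_interp I) c a \<in> D I a"
    if "\<forall>(c, a)\<in>A. cval I c a \<in> D I a"
    using that by (auto simp: named_alphabet_def)
  show "\<forall>x a t b \<phi>. term_of (named_alphabet A I) t b \<longrightarrow> assignment (named_interp I) \<phi> \<longrightarrow>
          (\<exists>f\<in>D I (TFun a b). \<forall>d\<in>D I a.
             app I f d = eval (named_interp I) (\<phi>(x := (\<phi> x)(a := d))) t)"
    using named_interp_comprehension[OF I] by blast
qed

lemma separating_named_interp:
  assumes "is_interp A I"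
  shows "separating (named_alphabet A I) (named_interp I)"
proof (rule separating_if_elements_named[OF is_interp_named_interp[OF assms]])
  fix u a
  assume "u \<in> D (named_interp I) a"
  then have "closed_term_of (named_alphabet A I) (Const (Inr u) a) a"
    unfolding closed_term_of_def term_of_def named_alphabet_def by simp
  then show "\<exists>t. closed_term_of (named_alphabet A I) t a \<and> V t (named_interp I) = u"
    unfolding V_def by auto
qed

text \<open>The first hypothesis is not needed: the denotation \<open>V\<close> uses the same default assignment
  in \<open>I\<close> and in its expansion, so truth transfers even for open members of \<open>S\<close>.\<close>
theorem mainTheorem17:
  fixes A :: "('c \<times> ty) set" and S :: "'c trm set" and I :: "('u, 'c) interp"
  assumes "\<forall>s\<in>S. sentence A s"
    and "is_model A I S"
  shows "\<exists>(A' :: (('c + 'u) \<times> ty) set) (I' :: ('u, 'c + 'u) interp).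
           (\<lambda>(c, a). (Inl c, a)) ` A \<subseteq> A' \<and>
           separating_model A' I' (map_trm Inl ` S)"
proof (intro exI conjI)
  have I: "is_interp A I" using assms(2) by (simp add: is_model_def)
  show "(\<lambda>(c, a). (Inl c, a)) ` A \<subseteq> named_alphabet A I"
    by (simp add: named_alphabet_def)
  have "is_model (named_alphabet A I) (named_interp I) (map_trm Inl ` S)"
    using assms(2) is_interp_named_interp[OF I]
    by (auto simp: is_model_def V_named_interp_map_trm)
  with separating_named_interp[OF I]
  show "separating_model (named_alphabet A I) (named_interp I) (map_trm Inl ` S)"
    by (simp add: separating_model_def)
qed

end
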